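(* Let $\mathcal{X}\subseteq\mathbb{R}^D$ be compact with $\lambda_D(\mathcal{X})>0$, and let $f$ be Lipschitz continuous with respect to the metrics induced by $\|\cdot\|_{\mathcal{Y}}$ and $\|\cdot\|_{\mathcal{X}_0}$. For a fixed architecture $\{N_l\}_{l=1}^L$, the function $p$ is integrable on $\bar{\mathcal{X}}=\mathcal{X}^{2\bar N}$ and $\int_{\bar{\mathcal{X}}}p\,d\lambda_{\bar D}=1$; consequently $P$ is a valid probability distribution.
   Context: $\lambda_k$ denotes $k$-dimensional Lebesgue measure. $f\colon\mathbb{R}^D\to\mathbb{R}^{N_{L+1}}$; $\|\cdot\|_{\mathcal{X}_0}$ is a norm on $\mathbb{R}^D$, $\|\cdot\|_{\mathcal{Y}}$ a norm on $\mathbb{R}^{N_{L+1}}$, and $\|\cdot\|_{\mathcal{X}_{l-1}}$ a norm on $\mathbb{R}^{N_{l-1}}$ for $l=2,\dots,L$. Let $\bar N=\sum_{l=1}^LN_l$, $\bar N_l=\sum_{k=1}^lN_k$ ($\bar N_0=0$), $\bar D=2\bar ND$, $\bar{\mathcal{X}}=\mathcal{X}^{2\bar N}$. Sampled network: fix an activation $\phi$ (continuous) and constants $s_1,s_2$; given pairs of points in $\mathcal{X}$ for layers $1,\dots,l-1$, the network $\Phi^{(0)}(x)=x$, $\Phi^{(k)}(x)=\phi(W_k\Phi^{(k-1)}(x)-b_k)$ has rows $w_{k,i}=s_1\frac{x^{(2)}_{k-1,i}-x^{(1)}_{k-1,i}}{\|x^{(2)}_{k-1,i}-x^{(1)}_{k-1,i}\|^2}$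 and biases $b_{k,i}=\langle w_{k,i},x^{(1)}_{k-1,i}\rangle+s_2$, where $x^{(j)}_{k-1,i}=\Phi^{(k-1)}(x^{(j)}_{0,i})$ for the $i$-th pair $(x^{(1)}_{0,i},x^{(2)}_{0,i})$ of layer $k$. Layer densities: for $l=1,\dots,L$, with $\epsilon_1=0$ and $\epsilon_l=\epsilon>0$ for $l\ge2$, given the set $X_{l-1}$ of the $2\bar N_{l-1}$ points of the earlier layers (defining $\Phi^{(l-1)}$), let $q_l(x^{(1)},x^{(2)}\mid X_{l-1})=\frac{\|f(x^{(2)})-f(x^{(1)})\|_{\mathcal{Y}}}{\max\{\|\Phi^{(l-1)}(x^{(2)})-\Phi^{(l-1)}(x^{(1)})\|_{\mathcal{X}_{l-1}},\epsilon_l\}}$ if $\Phi^{(l-1)}(x^{(1)})\neq\Phi^{(l-1)}(x^{(2)})$ and $0$ otherwise, for $x^{(1)},x^{(2)}\in\mathcal{X}$; $C_l=\int_{\mathcal{X}\times\mathcal{X}}q_l\,d\lambda_{2D}$; $p_l=q_l/C_l$ if $C_l>0$, else $p_l=1/\lambda_{2D}(\mathcal{X}\times\mathcal{X})$. Joint density: ordering all points as $x^{(1)}_1,x^{(2)}_1,\dots,x^{(1)}_{\bar N},x^{(2)}_{\bar N}$, set $p=\prod_{l=1}^L\prod_{i=1}^{N_l}p_l(x^{(1)}_{\bar N_{l-1}+i},x^{(2)}_{\bar N_{l-1}+i}\mid X_{l-1})$, with $X_{l-1}$ the points of layers $1,\dots,l-1$; $P$ is the measure on $\bar{\mathcal{X}}$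 with density $p$. *)

theory Defs
  imports "HOL-Analysis.Analysis" "HOL-Probability.Probability"
begin

definition is_norm_on :: "'v::real_vector set \<Rightarrow> ('v \<Rightarrow> real) \<Rightarrow> bool" where
  "is_norm_on V n \<longleftrightarrow>
     (\<forall>x\<in>V. 0 \<le> n x \<and> (n x = 0 \<longleftrightarrow> x = 0)) \<and>
     (\<forall>x\<in>V. \<forall>y\<in>V. n (x + y) \<le> n x + n y) \<and>
     (\<forall>c. \<forall>x\<in>V. n (c *\<^sub>R x) = \<bar>c\<bar> * n x)"

text \<open>Hidden-layer vectors in R^n are represented as functions nat => real vanishing from index n on.
  A norm on R^n in this representation:\<close>
definition is_norm_fin :: "nat \<Rightarrow> ((nat \<Rightarrow> real) \<Rightarrow> real) \<Rightarrow> bool" where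
  "is_norm_fin n nrm \<longleftrightarrow>
     (let V = {v :: nat \<Rightarrow> real. \<forall>j\<ge>n. v j = 0} in
     (\<forall>x\<in>V. 0 \<le> nrm x \<and> (nrm x = 0 \<longleftrightarrow> x = (\<lambda>_. 0))) \<and>
     (\<forall>x\<in>V. \<forall>y\<in>V. nrm (\<lambda>j. x j + y j) \<le> nrm x + nrm y) \<and>
     (\<forall>c. \<forall>x\<in>V. nrm (\<lambda>j. c * x j) = \<bar>c\<bar> * nrm x))"

definition Nb :: "(nat \<Rightarrow> nat) \<Rightarrow> nat \<Rightarrow> nat" where
  "Nb N l = (\<Sum>k\<in>{1..l}. N k)"

definition w_in :: "real \<Rightarrow> 'a::euclidean_space \<Rightarrow> 'a \<Rightarrow> 'a" where
  "w_in s1 a b = (s1 / (norm (b - a))\<^sup>2) *\<^sub>R (b - a)"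

definition neuron_in :: "(real \<Rightarrow> real) \<Rightarrow> real \<Rightarrow> real \<Rightarrow> 'a::euclidean_space \<Rightarrow> 'a \<Rightarrow> 'a \<Rightarrow> real" where
  "neuron_in \<phi> s1 s2 a b x = \<phi> (inner (w_in s1 a b) x - (inner (w_in s1 a b) a + s2))"

definition dot_n :: "nat \<Rightarrow> (nat \<Rightarrow> real) \<Rightarrow> (nat \<Rightarrow> real) \<Rightarrow> real" where
  "dot_n n u v = (\<Sum>j<n. u j * v j)"

definition w_h :: "real \<Rightarrow> nat \<Rightarrow> (nat \<Rightarrow> real) \<Rightarrow> (nat \<Rightarrow> real) \<Rightarrow> nat \<Rightarrow> real" where
  "w_h s1 n u v = (\<lambda>j. s1 * (v j - u j) / (\<Sum>i<n. (v i - u i)\<^sup>2))"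

definition neuron_h :: "(real \<Rightarrow> real) \<Rightarrow> real \<Rightarrow> real \<Rightarrow> nat \<Rightarrow> (nat \<Rightarrow> real) \<Rightarrow> (nat \<Rightarrow> real) \<Rightarrow> (nat \<Rightarrow> real) \<Rightarrow> real" where
  "neuron_h \<phi> s1 s2 n u v y = \<phi> (dot_n n (w_h s1 n u v) y - (dot_n n (w_h s1 n u v) u + s2))"

text \<open>Phi phi s1 s2 N xs k x = Phi^(k)(x) for k >= 1, where the i-th pair (0-based, global
  neuron index) is (xs (2 i), xs (2 i + 1)). The k = 0 clause is a dummy (Phi^(0) = id is
  handled separately, since it lives on the input type).\<close>
fun Phi :: "(real \<Rightarrow> real) \<Rightarrow> real \<Rightarrow> real \<Rightarrow> (nat \<Rightarrow> nat) \<Rightarrow> (nat \<Rightarrow> 'a::euclidean_space)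
             \<Rightarrow> nat \<Rightarrow> 'a \<Rightarrow> nat \<Rightarrow> real" where
  "Phi \<phi> s1 s2 N xs 0 x = (\<lambda>_. 0)"
| "Phi \<phi> s1 s2 N xs (Suc 0) x =
     (\<lambda>i. if i < N 1 then neuron_in \<phi> s1 s2 (xs (2 * i)) (xs (2 * i + 1)) x else 0)"
| "Phi \<phi> s1 s2 N xs (Suc (Suc k)) x =
     (\<lambda>i. if i < N (Suc (Suc k)) then
            neuron_h \<phi> s1 s2 (N (Suc k))
              (Phi \<phi> s1 s2 N xs (Suc k) (xs (2 * (Nb N (Suc k) + i))))
              (Phi \<phi> s1 s2 N xs (Suc k) (xs (2 * (Nb N (Suc k) + i) + 1)))
              (Phi \<phi> s1 s2 N xs (Suc k) x)
          else 0)"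

text \<open>Unnormalised layer density q_l(a,b | X_{l-1}); epsilon_1 = 0, epsilon_l = eps for l >= 2.
  nX k is the norm on R^(N k) (the space of layer k), nX0 the norm on the input space.\<close>
definition qdens :: "('a::euclidean_space \<Rightarrow> 'b::euclidean_space) \<Rightarrow> ('b \<Rightarrow> real) \<Rightarrow> ('a \<Rightarrow> real)
   \<Rightarrow> (nat \<Rightarrow> (nat \<Rightarrow> real) \<Rightarrow> real) \<Rightarrow> real \<Rightarrow> (real \<Rightarrow> real) \<Rightarrow> real \<Rightarrow> real \<Rightarrow> (nat \<Rightarrow> nat)
   \<Rightarrow> (nat \<Rightarrow> 'a) \<Rightarrow> nat \<Rightarrow> 'a \<Rightarrow> 'a \<Rightarrow> real" where
  "qdens f nY nX0 nX eps \<phi> s1 s2 N xs l a b =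
     (if l = 1 then
        (if a \<noteq> b then nY (f b - f a) / max (nX0 (b - a)) 0 else 0)
      else
        (let u = Phi \<phi> s1 s2 N xs (l - 1) a; v = Phi \<phi> s1 s2 N xs (l - 1) b in
         if u \<noteq> v then nY (f b - f a) / max (nX (l - 1) (\<lambda>j. v j - u j)) eps else 0))"

definition Cconst :: "('a::euclidean_space \<Rightarrow> 'b::euclidean_space) \<Rightarrow> ('b \<Rightarrow> real) \<Rightarrow> ('a \<Rightarrow> real)
   \<Rightarrow> (nat \<Rightarrow> (nat \<Rightarrow> real) \<Rightarrow> real) \<Rightarrow> real \<Rightarrow> (real \<Rightarrow> real) \<Rightarrow> real \<Rightarrow> real \<Rightarrow> (nat \<Rightarrow> nat)
   \<Rightarrow> 'a set \<Rightarrow> (nat \<Rightarrow> 'a) \<Rightarrow> nat \<Rightarrow> ennreal" where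
  "Cconst f nY nX0 nX eps \<phi> s1 s2 N X xs l =
     (\<integral>\<^sup>+ z \<in> X \<times> X. ennreal (qdens f nY nX0 nX eps \<phi> s1 s2 N xs l (fst z) (snd z)) \<partial>lborel)"

definition pdens :: "('a::euclidean_space \<Rightarrow> 'b::euclidean_space) \<Rightarrow> ('b \<Rightarrow> real) \<Rightarrow> ('a \<Rightarrow> real)
   \<Rightarrow> (nat \<Rightarrow> (nat \<Rightarrow> real) \<Rightarrow> real) \<Rightarrow> real \<Rightarrow> (real \<Rightarrow> real) \<Rightarrow> real \<Rightarrow> real \<Rightarrow> (nat \<Rightarrow> nat)
   \<Rightarrow> 'a set \<Rightarrow> (nat \<Rightarrow> 'a) \<Rightarrow> nat \<Rightarrow> 'a \<Rightarrow> 'a \<Rightarrow> real" where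
  "pdens f nY nX0 nX eps \<phi> s1 s2 N X xs l a b =
     (if 0 < Cconst f nY nX0 nX eps \<phi> s1 s2 N X xs l
      then qdens f nY nX0 nX eps \<phi> s1 s2 N xs l a b / enn2real (Cconst f nY nX0 nX eps \<phi> s1 s2 N X xs l)
      else 1 / measure lborel (X \<times> X))"

definition joint_dens :: "('a::euclidean_space \<Rightarrow> 'b::euclidean_space) \<Rightarrow> ('b \<Rightarrow> real) \<Rightarrow> ('a \<Rightarrow> real)
   \<Rightarrow> (nat \<Rightarrow> (nat \<Rightarrow> real) \<Rightarrow> real) \<Rightarrow> real \<Rightarrow> (real \<Rightarrow> real) \<Rightarrow> real \<Rightarrow> real \<Rightarrow> nat \<Rightarrow> (nat \<Rightarrow> nat)
   \<Rightarrow> 'a set \<Rightarrow> (nat \<Rightarrow> 'a) \<Rightarrow> real" where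
  "joint_dens f nY nX0 nX eps \<phi> s1 s2 L N X xs =
     (\<Prod>l\<in>{1..L}. \<Prod>i<N l.
        pdens f nY nX0 nX eps \<phi> s1 s2 N X xs l
          (xs (2 * (Nb N (l - 1) + i))) (xs (2 * (Nb N (l - 1) + i) + 1)))"

end

theory Submission
  imports Defs
begin

text \<open>
  The joint density factorises along the sampling order: the pair of the \<open>j\<close>-th neuron (counted
  over all layers) has the density \<open>p\<^sub>l\<close> of its layer, which depends only on the points of the
  earlier layers, i.e. on the first \<open>2 j\<close> coordinates. Each \<open>p\<^sub>l\<close> is a probability density on
  \<open>\<X> \<times> \<X>\<close>: for \<open>l = 1\<close> the quotient \<open>q\<^sub>l\<close> is bounded by the Lipschitz constant of \<open>f\<close>,
  for \<open>l \<ge> 2\<close> its denominator is at least \<open>\<epsilon>\<close> and its numerator is bounded on the compact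
  set \<open>\<X> \<times> \<X>\<close>; hence \<open>C\<^sub>l < \<infinity>\<close>, and either \<open>p\<^sub>l = q\<^sub>l / C\<^sub>l\<close> or \<open>p\<^sub>l\<close> is uniform.
  Integrating out the pairs one at a time, last pair first (Tonelli), gives total mass \<open>1\<close>.
  The technical core is the joint measurability of \<open>p\<^sub>l\<close> and \<open>C\<^sub>l\<close> in all points, including
  those entering through the network \<open>\<Phi>\<close>.
\<close>

section \<open>Norms\<close>

lemma is_norm_onD:
  assumes "is_norm_on UNIV n"
  shows is_norm_on_nonneg: "0 \<le> n x"
    and is_norm_on_eq_0_iff: "n x = 0 \<longleftrightarrow> x = 0"
    and is_norm_on_triangle: "n (x + y) \<le> n x + n y"
    and is_norm_on_scaleR: "n (c *\<^sub>R x) = \<bar>c\<bar> * n x"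
  using assms unfolding is_norm_on_def by auto

lemma is_norm_on_minus_commute:
  assumes "is_norm_on UNIV n"
  shows "n (x - y) = n (y - x)"
  using is_norm_on_scaleR[OF assms, of "-1" "x - y"] by simp

lemma is_norm_on_abs_diff_le:
  assumes "is_norm_on UNIV n"
  shows "\<bar>n x - n y\<bar> \<le> n (x - y)"
  using is_norm_on_triangle[OF assms, of y "x - y"] is_norm_on_triangle[OF assms, of x "y - x"]
    is_norm_on_minus_commute[OF assms, of x y] by simp

lemma is_norm_on_sum:
  assumes "is_norm_on UNIV n" "finite A"
  shows "n (\<Sum>a\<in>A. g a) \<le> (\<Sum>a\<in>A. n (g a))"
  using assms(2)
proof induction
  case empty
  show ?case using is_norm_on_eq_0_iff[OF assms(1), of 0] by simp
next
  case (insert a A)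
  then show ?case using is_norm_on_triangle[OF assms(1), of "g a" "sum g A"] by simp
qed

lemma is_norm_on_le_norm:
  fixes n :: "'a::euclidean_space \<Rightarrow> real"
  assumes "is_norm_on UNIV n"
  obtains C where "0 \<le> C" "\<And>x. n x \<le> C * norm x"
proof
  show "0 \<le> (\<Sum>b\<in>Basis. n b)" using is_norm_on_nonneg[OF assms] by (simp add: sum_nonneg)
  fix x :: 'a
  have "n x = n (\<Sum>b\<in>Basis. (x \<bullet> b) *\<^sub>R b)" by (simp add: euclidean_representation)
  also have "\<dots> \<le> (\<Sum>b\<in>Basis. n ((x \<bullet> b) *\<^sub>R b))" by (rule is_norm_on_sum[OF assms]) simp
  also have "\<dots> = (\<Sum>b\<in>Basis. \<bar>x \<bullet> b\<bar> * n b)" by (simp add: is_norm_on_scaleR[OF assms])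
  also have "\<dots> \<le> (\<Sum>b\<in>Basis. norm x * n b)"
    by (intro sum_mono mult_right_mono Basis_le_norm is_norm_on_nonneg[OF assms]) auto
  finally show "n x \<le> (\<Sum>b\<in>Basis. n b) * norm x" by (simp add: sum_distrib_left mult.commute)
qed

lemma continuous_on_is_norm_on:
  fixes n :: "'a::euclidean_space \<Rightarrow> real"
  assumes "is_norm_on UNIV n"
  shows "continuous_on UNIV n"
proof -
  obtain C where "0 \<le> C" "\<And>x. n x \<le> C * norm x" using is_norm_on_le_norm[OF assms] by blast
  then have "C-lipschitz_on UNIV n"
    using is_norm_on_abs_diff_le[OF assms] by (intro lipschitz_onI) (auto simp: dist_real_def dist_norm intro: order_trans)
  then show ?thesis by (rule lipschitz_on_continuous_on)
qed

lemma is_norm_finD: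
  assumes "is_norm_fin n nrm" "\<forall>j\<ge>n. x j = 0"
  shows is_norm_fin_eq_0_iff: "nrm x = 0 \<longleftrightarrow> x = (\<lambda>_. 0)"
    and is_norm_fin_triangle: "\<forall>j\<ge>n. y j = 0 \<Longrightarrow> nrm (\<lambda>j. x j + y j) \<le> nrm x + nrm y"
    and is_norm_fin_scale: "nrm (\<lambda>j. c * x j) = \<bar>c\<bar> * nrm x"
  using assms unfolding is_norm_fin_def Let_def by auto

lemma is_norm_fin_sum:
  assumes "is_norm_fin n nrm" "finite A" "\<And>a j. a \<in> A \<Longrightarrow> n \<le> j \<Longrightarrow> g a j = 0"
  shows "nrm (\<lambda>j. \<Sum>a\<in>A. g a j) \<le> (\<Sum>a\<in>A. nrm (g a))"
  using assms(2,3)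
proof induction
  case empty
  show ?case using is_norm_fin_eq_0_iff[OF assms(1), of "\<lambda>_. 0"] by simp
next
  case (insert a A)
  then show ?case
    using is_norm_fin_triangle[OF assms(1), of "g a" "\<lambda>j. \<Sum>a\<in>A. g a j"] by simp
qed

lemma is_norm_fin_le_sum_abs:
  assumes "is_norm_fin n nrm" "\<forall>j\<ge>n. x j = 0"
  shows "nrm x \<le> (\<Sum>i<n. \<bar>x i\<bar> * nrm (indicator {i}))"
proof -
  have "(\<Sum>i<n. x i * indicator {i} j) = x j" for j
    using assms(2) by (cases "j < n") (simp_all add: indicator_def not_less)
  then have "x = (\<lambda>j. \<Sum>i<n. x i * indicator {i} j)" by simp
  then have "nrm x \<le> (\<Sum>i<n. nrm (\<lambda>j. x i * indicator {i} j))"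
    using is_norm_fin_sum[OF assms(1), of "{..<n}" "\<lambda>i j. x i * indicator {i} j"] by auto
  also have "\<dots> = (\<Sum>i<n. \<bar>x i\<bar> * nrm (indicator {i}))"
    by (intro sum.cong refl is_norm_fin_scale[OF assms(1)]) auto
  finally show ?thesis .
qed

lemma is_norm_fin_abs_diff_le:
  assumes "is_norm_fin n nrm" "\<forall>j\<ge>n. x j = 0" "\<forall>j\<ge>n. y j = 0"
  shows "\<bar>nrm x - nrm y\<bar> \<le> (\<Sum>i<n. \<bar>x i - y i\<bar> * nrm (indicator {i}))"
proof -
  have "nrm x \<le> nrm y + nrm (\<lambda>j. x j - y j)"
    using is_norm_fin_triangle[OF assms(1), of y "\<lambda>j. x j - y j"] assms by simp
  moreover have "nrm y \<le> nrm x + nrm (\<lambda>j. x j - y j)"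
    using is_norm_fin_triangle[OF assms(1), of x "\<lambda>j. (-1) * (x j - y j)"]
      is_norm_fin_scale[OF assms(1), of "\<lambda>j. x j - y j" "-1"] assms by simp
  moreover have "nrm (\<lambda>j. x j - y j) \<le> (\<Sum>i<n. \<bar>x i - y i\<bar> * nrm (indicator {i}))"
    using is_norm_fin_le_sum_abs[OF assms(1)] assms by simp
  ultimately show ?thesis by linarith
qed

text \<open>Continuity refers to the product topology on \<^typ>\<open>nat \<Rightarrow> real\<close>, whose Borel sets
  are those of the product \<open>\<sigma>\<close>-algebra (\<open>sets_PiM_equal_borel\<close>).\<close>

lemma continuous_on_is_norm_fin_truncate:
  assumes "is_norm_fin n nrm"
  shows "continuous_on UNIV (\<lambda>y. nrm (\<lambda>j. if j < n then y j else 0))"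
  unfolding continuous_on_eq_continuous_at[OF open_UNIV]
proof (intro ballI)
  fix y :: "nat \<Rightarrow> real"
  let ?g = "\<lambda>y. nrm (\<lambda>j. if j < n then y j else 0)"
  let ?d = "\<lambda>x. \<Sum>i<n. \<bar>x i - y i\<bar> * nrm (indicator {i})"
  have "continuous_on UNIV ?d"
    by (intro continuous_intros continuous_on_product_coordinates)
  then have "isCont ?d y" by (simp add: continuous_on_eq_continuous_at)
  then have d: "(?d \<longlongrightarrow> 0) (at y)" by (simp add: isCont_def)
  have bound: "norm (?g x - ?g y) \<le> ?d x" for x
    using is_norm_fin_abs_diff_le[OF assms, of "\<lambda>j. if j < n then x j else 0" "\<lambda>j. if j < n then y j else 0"]
    by simp
  have "((\<lambda>x. ?g x - ?g y) \<longlongrightarrow> 0) (at y)"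
    by (rule Lim_null_comparison[OF always_eventually d]) (rule allI, rule bound)
  then show "isCont ?g y" by (simp add: isCont_def LIM_zero_iff)
qed

lemma borel_measurable_is_norm_fin:
  assumes "is_norm_fin n nrm"
    and "\<And>j. (\<lambda>\<omega>. W \<omega> j) \<in> borel_measurable M"
    and "\<And>\<omega> j. n \<le> j \<Longrightarrow> W \<omega> j = 0"
  shows "(\<lambda>\<omega>. nrm (W \<omega>)) \<in> borel_measurable M"
proof -
  have "W \<in> measurable M (PiM UNIV (\<lambda>_. borel))"
    using assms(2) by (intro measurable_PiM_single') auto
  then have "W \<in> borel_measurable M"
    by (simp add: measurable_cong_sets[OF refl sets_PiM_equal_borel])
  then have "(\<lambda>\<omega>. nrm (\<lambda>j. if j < n then W \<omega> j else 0)) \<in> borel_measurable M"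
    by (rule borel_measurable_continuous_on[OF continuous_on_is_norm_fin_truncate[OF assms(1)]])
  moreover have "(\<lambda>j. if j < n then W \<omega> j else 0) = W \<omega>" for \<omega>
    using assms(3) by (auto simp: not_less)
  ultimately show ?thesis by simp
qed

section \<open>The sampled network\<close>

lemma Nb_0 [simp]: "Nb N 0 = 0"
  by (simp add: Nb_def)

lemma Nb_Suc: "Nb N (Suc k) = Nb N k + N (Suc k)"
  by (simp add: Nb_def)

lemma Nb_mono: "k \<le> k' \<Longrightarrow> Nb N k \<le> Nb N k'"
  by (induction k') (auto simp: Nb_Suc le_Suc_eq)

lemma Phi_cong_prefix:
  assumes "\<And>i. i < 2 * Nb N k \<Longrightarrow> xs i = ys i"
  shows "Phi \<phi> s1 s2 N xs k = Phi \<phi> s1 s2 N ys k"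
  using assms
proof (induction k)
  case 0
  show ?case by (simp add: fun_eq_iff)
next
  case (Suc k)
  have IH: "Phi \<phi> s1 s2 N xs k x = Phi \<phi> s1 s2 N ys k x" for x
    using Suc Nb_mono[of k "Suc k" N] by simp
  show ?case
  proof (cases k)
    case 0
    then show ?thesis using Suc.prems by (auto simp: Nb_def intro!: ext)
  next
    case (Suc k')
    then show ?thesis using \<open>\<And>i. i < 2 * Nb N (Suc k) \<Longrightarrow> xs i = ys i\<close> IH
      by (auto simp: Nb_Suc intro!: ext)
  qed
qed

lemma Phi_eq_0:
  assumes "1 \<le> k" "N k \<le> j"
  shows "Phi \<phi> s1 s2 N xs k x j = 0"
proof (cases k)
  case (Suc k')
  then show ?thesis using assms by (cases k') auto
qed (use assms in simp)

lemma borel_measurable_Phi: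
  assumes "continuous_on UNIV \<phi>"
    and XS: "\<And>i. (\<lambda>\<omega>. XS \<omega> i) \<in> borel_measurable M"
    and "A \<in> borel_measurable M"
  shows "(\<lambda>\<omega>. Phi \<phi> s1 s2 N (XS \<omega>) k (A \<omega>) j) \<in> borel_measurable M"
  using assms(3)
proof (induction k arbitrary: A j)
  case 0
  show ?case by simp
next
  case (Suc k)
  note [measurable] = XS Suc.prems borel_measurable_continuous_onI[OF assms(1)]
  show ?case
  proof (cases k)
    case 0
    show ?thesis unfolding 0 Phi.simps neuron_in_def w_in_def by measurable
  next
    case (Suc k')
    have [measurable]:
      "\<And>j'. (\<lambda>\<omega>. Phi \<phi> s1 s2 N (XS \<omega>) (Suc k') (A \<omega>) j') \<in> borel_measurable M"
      "\<And>j'. (\<lambda>\<omega>. Phi \<phi> s1 s2 N (XS \<omega>) (Suc k') (XS \<omega> (2 * (Nb N (Suc k') + j))) j')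
         \<in> borel_measurable M"
      "\<And>j'. (\<lambda>\<omega>. Phi \<phi> s1 s2 N (XS \<omega>) (Suc k') (XS \<omega> (2 * (Nb N (Suc k') + j) + 1)) j')
         \<in> borel_measurable M"
      using Suc.IH unfolding Suc by measurable
    show ?thesis unfolding Suc Phi.simps neuron_h_def dot_n_def w_h_def by measurable
  qed
qed

definition layer_of :: "(nat \<Rightarrow> nat) \<Rightarrow> nat \<Rightarrow> nat" where
  "layer_of N j = (LEAST l. j < Nb N l)"

lemma layer_of_bounds:
  assumes "j < Nb N L"
  shows "1 \<le> layer_of N j" "layer_of N j \<le> L" "Nb N (layer_of N j - 1) \<le> j"
proof -
  have less: "j < Nb N (layer_of N j)"
    unfolding layer_of_def by (rule LeastI[of _ L]) (rule assms)
  show "layer_of N j \<le> L"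
    unfolding layer_of_def by (rule Least_le) (rule assms)
  show "1 \<le> layer_of N j"
    using less by (cases "layer_of N j") auto
  then have "\<not> j < Nb N (layer_of N j - 1)"
    unfolding layer_of_def by (intro not_less_Least) simp
  then show "Nb N (layer_of N j - 1) \<le> j" by simp
qed

lemma layer_of_Nb_add:
  assumes "i < N (Suc l)"
  shows "layer_of N (Nb N l + i) = Suc l"
  unfolding layer_of_def
proof (rule Least_equality)
  show "Nb N l + i < Nb N (Suc l)" using assms by (simp add: Nb_Suc)
next
  fix l' assume "Nb N l + i < Nb N l'"
  then show "Suc l \<le> l'"
    using Nb_mono[of l' l N] by (cases "Suc l \<le> l'") auto
qed

lemma prod_layers_eq_prod_neurons:
  fixes G :: "nat \<Rightarrow> nat \<Rightarrow> 'b::comm_monoid_mult"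
  shows "(\<Prod>l\<in>{1..L}. \<Prod>i<N l. G l (Nb N (l - 1) + i)) = (\<Prod>j<Nb N L. G (layer_of N j) j)"
proof (induction L)
  case 0
  then show ?case by simp
next
  case (Suc L)
  have split: "(\<Prod>j<a + b. h j) = (\<Prod>j<a. h j) * (\<Prod>i<b. h (a + i))" for a b and h :: "nat \<Rightarrow> 'b"
    by (induction b) (simp_all add: mult_ac)
  have "(\<Prod>l\<in>{1..Suc L}. \<Prod>i<N l. G l (Nb N (l - 1) + i))
      = (\<Prod>j<Nb N L. G (layer_of N j) j) * (\<Prod>i<N (Suc L). G (Suc L) (Nb N L + i))"
    using Suc.IH by (simp add: prod.cl_ivl_Suc)
  also have "\<dots> = (\<Prod>j<Nb N L. G (layer_of N j) j) * (\<Prod>i<N (Suc L). G (layer_of N (Nb N L + i)) (Nb N L + i))"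
    by (simp add: layer_of_Nb_add)
  also have "\<dots> = (\<Prod>j<Nb N (Suc L). G (layer_of N j) j)"
    unfolding Nb_Suc by (rule split[symmetric])
  finally show ?case .
qed

lemma joint_dens_eq_prod_neurons:
  "joint_dens f nY nX0 nX eps \<phi> s1 s2 L N X xs
    = (\<Prod>j<Nb N L. pdens f nY nX0 nX eps \<phi> s1 s2 N X xs (layer_of N j) (xs (2 * j)) (xs (2 * j + 1)))"
  unfolding joint_dens_def
  by (rule prod_layers_eq_prod_neurons[where G = "\<lambda>l j. pdens f nY nX0 nX eps \<phi> s1 s2 N X xs l (xs (2 * j)) (xs (2 * j + 1))"])

section \<open>Densities on finite products\<close>

lemma borel_measurable_fst_snd [measurable]:
  "fst \<in> borel_measurable borel" "snd \<in> borel_measurable borel"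
  by (simp_all add: borel_measurable_continuous_onI continuous_on_fst continuous_on_snd)

lemma borel_measurable_PiM_component:
  "(\<lambda>x. x i) \<in> borel_measurable (Pi\<^sub>M I (\<lambda>_. lborel :: 'a::euclidean_space measure))"
proof (cases "i \<in> I")
  case True
  then show ?thesis by measurable
next
  case False
  then have "x i = undefined" if "x \<in> space (Pi\<^sub>M I (\<lambda>_. lborel :: 'a measure))" for x
    using that by (auto simp: space_PiM PiE_def extensional_def)
  then show ?thesis
    by (subst measurable_cong[where g = "\<lambda>_. undefined"]) simp_all
qed

lemma measurable_fun_upd2:
  assumes "x \<in> space (Pi\<^sub>M I M)" "i \<notin> I"
  shows "(\<lambda>(y, z). x(i := y, j := z)) \<in> measurable (M i \<Otimes>\<^sub>M M j) (Pi\<^sub>M (insert j (insert i I)) M)"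
proof -
  have "(\<lambda>(y, z). (x(i := y), z)) \<in> measurable (M i \<Otimes>\<^sub>M M j) (Pi\<^sub>M (insert i I) M \<Otimes>\<^sub>M M j)"
    using measurable_component_update[OF assms] by (simp add: case_prod_unfold)
  from measurable_compose[OF this measurable_add_dim] show ?thesis
    by (simp add: case_prod_unfold)
qed

lemma (in product_sigma_finite) product_nn_integral_insert2:
  assumes "finite I" "i \<notin> I" "j \<notin> insert i I"
    and f: "f \<in> borel_measurable (Pi\<^sub>M (insert j (insert i I)) M)"
  shows "integral\<^sup>N (Pi\<^sub>M (insert j (insert i I)) M) f
    = (\<integral>\<^sup>+ x. (\<integral>\<^sup>+ (y, z). f (x(i := y, j := z)) \<partial>(M i \<Otimes>\<^sub>M M j)) \<partial>Pi\<^sub>M I M)"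
proof -
  have "(\<lambda>(x, z). f (x(j := z))) \<in> borel_measurable (Pi\<^sub>M (insert i I) M \<Otimes>\<^sub>M M j)"
    using measurable_compose[OF measurable_add_dim f] by (simp add: case_prod_unfold)
  then have "(\<lambda>x. \<integral>\<^sup>+ z. f (x(j := z)) \<partial>M j) \<in> borel_measurable (Pi\<^sub>M (insert i I) M)"
    by (rule M.borel_measurable_nn_integral)
  with assms have "integral\<^sup>N (Pi\<^sub>M (insert j (insert i I)) M) f
    = (\<integral>\<^sup>+ x. (\<integral>\<^sup>+ y. (\<integral>\<^sup>+ z. f (x(i := y, j := z)) \<partial>M j) \<partial>M i) \<partial>Pi\<^sub>M I M)"
    by (simp add: product_nn_integral_insert)
  also have "\<dots> = (\<integral>\<^sup>+ x. (\<integral>\<^sup>+ (y, z). f (x(i := y, j := z)) \<partial>(M i \<Otimes>\<^sub>M M j)) \<partial>Pi\<^sub>M I M)"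
  proof (rule nn_integral_cong)
    fix x assume "x \<in> space (Pi\<^sub>M I M)"
    from measurable_compose[OF measurable_fun_upd2[OF this \<open>i \<notin> I\<close>] f]
    show "(\<integral>\<^sup>+ y. (\<integral>\<^sup>+ z. f (x(i := y, j := z)) \<partial>M j) \<partial>M i)
        = (\<integral>\<^sup>+ (y, z). f (x(i := y, j := z)) \<partial>(M i \<Otimes>\<^sub>M M j))"
      by (subst M.nn_integral_fst[symmetric]) (simp_all add: case_prod_unfold)
  qed
  finally show ?thesis .
qed

lemma borel_measurable_PiM_prefix:
  fixes g :: "(nat \<Rightarrow> 'a) \<Rightarrow> ennreal"
  assumes "g \<in> borel_measurable (Pi\<^sub>M {..<n} M)" "n \<le> m"
    and "\<And>x y. (\<And>i. i < n \<Longrightarrow> x i = y i) \<Longrightarrow> g x = g y"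
  shows "g \<in> borel_measurable (Pi\<^sub>M {..<m} M)"
proof -
  have "(\<lambda>x. g (restrict x {..<n})) \<in> borel_measurable (Pi\<^sub>M {..<m} M)"
    using measurable_compose[OF measurable_restrict_subset assms(1)] assms(2) by simp
  moreover have "g (restrict x {..<n}) = g x" for x
    by (rule assms(3)) simp
  ultimately show ?thesis by simp
qed

lemma nn_integral_PiM_last_pair:
  fixes g G :: "(nat \<Rightarrow> 'a) \<Rightarrow> ennreal"
  assumes "sigma_finite_measure \<mu>"
    and g: "g \<in> borel_measurable (Pi\<^sub>M {..<2 * Suc k} (\<lambda>_. \<mu>))"
    and G: "G \<in> borel_measurable (Pi\<^sub>M {..<2 * Suc k} (\<lambda>_. \<mu>))"
    and g_upd: "\<And>x y z. g (x(2 * k := y, 2 * k + 1 := z)) = g x"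
  shows "(\<integral>\<^sup>+ x. g x * G x \<partial>Pi\<^sub>M {..<2 * Suc k} (\<lambda>_. \<mu>))
    = (\<integral>\<^sup>+ x. g x * (\<integral>\<^sup>+ (y, z). G (x(2 * k := y, 2 * k + 1 := z)) \<partial>(\<mu> \<Otimes>\<^sub>M \<mu>)) \<partial>Pi\<^sub>M {..<2 * k} (\<lambda>_. \<mu>))"
proof -
  interpret product_sigma_finite "\<lambda>_. \<mu>"
    using assms(1) by (simp add: product_sigma_finite_def)
  have dom: "{..<2 * Suc k} = insert (2 * k + 1) (insert (2 * k) {..<2 * k})" by auto
  have "(\<integral>\<^sup>+ x. g x * G x \<partial>Pi\<^sub>M {..<2 * Suc k} (\<lambda>_. \<mu>))
      = (\<integral>\<^sup>+ x. (\<integral>\<^sup>+ (y, z). g x * G (x(2 * k := y, 2 * k + 1 := z)) \<partial>(\<mu> \<Otimes>\<^sub>M \<mu>)) \<partial>Pi\<^sub>M {..<2 * k} (\<lambda>_. \<mu>))"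
    using g G unfolding dom by (subst product_nn_integral_insert2) (auto simp: g_upd[simplified])
  also have "\<dots> = (\<integral>\<^sup>+ x. g x * (\<integral>\<^sup>+ (y, z). G (x(2 * k := y, 2 * k + 1 := z)) \<partial>(\<mu> \<Otimes>\<^sub>M \<mu>))
      \<partial>Pi\<^sub>M {..<2 * k} (\<lambda>_. \<mu>))"
  proof (rule nn_integral_cong)
    fix x assume "x \<in> space (Pi\<^sub>M {..<2 * k} (\<lambda>_. \<mu>))"
    from measurable_compose[OF measurable_fun_upd2[OF this] G[unfolded dom]]
    show "(\<integral>\<^sup>+ (y, z). g x * G (x(2 * k := y, 2 * k + 1 := z)) \<partial>(\<mu> \<Otimes>\<^sub>M \<mu>))
        = g x * (\<integral>\<^sup>+ (y, z). G (x(2 * k := y, 2 * k + 1 := z)) \<partial>(\<mu> \<Otimes>\<^sub>M \<mu>))"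
      by (simp add: case_prod_unfold nn_integral_cmult)
  qed
  finally show ?thesis .
qed

lemma nn_integral_PiM_prod_pair_kernels:
  fixes G :: "nat \<Rightarrow> (nat \<Rightarrow> 'a) \<Rightarrow> ennreal"
  assumes "sigma_finite_measure \<mu>"
    and meas: "\<And>j. j < K \<Longrightarrow> G j \<in> borel_measurable (Pi\<^sub>M {..<2 * Suc j} (\<lambda>_. \<mu>))"
    and prefix: "\<And>j x y. j < K \<Longrightarrow> (\<And>i. i < 2 * Suc j \<Longrightarrow> x i = y i) \<Longrightarrow> G j x = G j y"
    and kernel: "\<And>j x. j < K \<Longrightarrow> (\<integral>\<^sup>+ (y, z). G j (x(2 * j := y, 2 * j + 1 := z)) \<partial>(\<mu> \<Otimes>\<^sub>M \<mu>)) = 1"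
  shows "(\<integral>\<^sup>+ x. (\<Prod>j<K. G j x) \<partial>Pi\<^sub>M {..<2 * K} (\<lambda>_. \<mu>)) = 1"
proof -
  have "(\<integral>\<^sup>+ x. (\<Prod>j<k. G j x) \<partial>Pi\<^sub>M {..<2 * k} (\<lambda>_. \<mu>)) = 1" if "k \<le> K" for k
    using that
  proof (induction k)
    case 0
    show ?case by (simp add: PiM_empty)
  next
    case (Suc k)
    have "(\<lambda>x. \<Prod>j<k. G j x) \<in> borel_measurable (Pi\<^sub>M {..<2 * Suc k} (\<lambda>_. \<mu>))"
    proof (rule borel_measurable_prod_ennreal, rule borel_measurable_PiM_prefix)
      fix j assume j: "j \<in> {..<k}"
      with Suc.prems have "j < K" by simp
      then show "G j \<in> borel_measurable (Pi\<^sub>M {..<2 * Suc j} (\<lambda>_. \<mu>))" by (rule meas)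
      show "2 * Suc j \<le> 2 * Suc k" using j by simp
      show "G j x = G j y" if "\<And>i. i < 2 * Suc j \<Longrightarrow> x i = y i" for x y
        using \<open>j < K\<close> that by (rule prefix)
    qed
    moreover have "(\<Prod>j<k. G j (x(2 * k := y, 2 * k + 1 := z))) = (\<Prod>j<k. G j x)" for x y z
      using Suc.prems by (intro prod.cong refl prefix) auto
    ultimately have "(\<integral>\<^sup>+ x. (\<Prod>j<k. G j x) * G k x \<partial>Pi\<^sub>M {..<2 * Suc k} (\<lambda>_. \<mu>))
        = (\<integral>\<^sup>+ x. (\<Prod>j<k. G j x) * (\<integral>\<^sup>+ (y, z). G k (x(2 * k := y, 2 * k + 1 := z)) \<partial>(\<mu> \<Otimes>\<^sub>M \<mu>))
            \<partial>Pi\<^sub>M {..<2 * k} (\<lambda>_. \<mu>))"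
      using Suc.prems by (intro nn_integral_PiM_last_pair assms(1) meas) auto
    then show ?case
      using Suc kernel[of k] by simp
  qed
  then show ?thesis by simp
qed

lemma indicator_PiE_eq_prod:
  assumes "finite I" "x \<in> extensional I"
  shows "indicator (Pi\<^sub>E I (\<lambda>_. A)) x = (\<Prod>i\<in>I. indicator A (x i) :: 'b::comm_semiring_1)"
  using assms by (auto simp: indicator_def PiE_iff intro!: prod_zero)

lemma indicator_PiE_eq_prod_pairs:
  fixes K :: nat
  assumes "x \<in> extensional {..<2 * K}"
  shows "indicator (Pi\<^sub>E {..<2 * K} (\<lambda>_. A)) x
    = (\<Prod>j<K. indicator A (x (2 * j)) * indicator A (x (2 * j + 1)) :: 'b::comm_semiring_1)"
proof -
  have "indicator (Pi\<^sub>E {..<2 * K} (\<lambda>_. A)) x = (\<Prod>i<K * 2. indicator A (x i) :: 'b)"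
    using indicator_PiE_eq_prod[OF _ assms] by (simp add: mult.commute)
  also have "\<dots> = (\<Prod>j<K. \<Prod>i\<in>{j * 2..<j * 2 + 2}. indicator A (x i))"
    by (rule prod.nat_group[symmetric])
  also have "\<dots> = (\<Prod>j<K. indicator A (x (2 * j)) * indicator A (x (2 * j + 1)))"
    by (intro prod.cong refl) (simp add: numeral_2_eq_2 mult.commute)
  finally show ?thesis .
qed

lemma nn_integral_set_normalize:
  fixes g :: "'a \<Rightarrow> real"
  assumes "g \<in> borel_measurable M" "A \<in> sets M" "\<And>x. 0 \<le> g x"
    and "0 < (\<integral>\<^sup>+ x \<in> A. ennreal (g x) \<partial>M)" "(\<integral>\<^sup>+ x \<in> A. ennreal (g x) \<partial>M) < \<infinity>"
  shows "(\<integral>\<^sup>+ x \<in> A. ennreal (g x / enn2real (\<integral>\<^sup>+ x \<in> A. ennreal (g x) \<partial>M)) \<partial>M) = 1"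
proof -
  define c where "c = enn2real (\<integral>\<^sup>+ x \<in> A. ennreal (g x) \<partial>M)"
  have c: "(\<integral>\<^sup>+ x \<in> A. ennreal (g x) \<partial>M) = ennreal c" "0 < c"
    using assms(4,5) by (auto simp: c_def ennreal_enn2real_if enn2real_positive_iff)
  have "ennreal (g x / c) = ennreal (g x) * ennreal (1 / c)" for x
    using assms(3)[of x] c(2) ennreal_mult[of "g x" "1 / c"] by simp
  then have "(\<integral>\<^sup>+ x \<in> A. ennreal (g x / c) \<partial>M) = (\<integral>\<^sup>+ x. ennreal (g x) * indicator A x * ennreal (1 / c) \<partial>M)"
    by (simp add: mult_ac)
  also have "\<dots> = (\<integral>\<^sup>+ x \<in> A. ennreal (g x) \<partial>M) * ennreal (1 / c)"
    using assms(1,2) by (intro nn_integral_multc borel_measurable_times_ennreal) auto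
  also have "\<dots> = 1"
    using c by (simp flip: ennreal_mult)
  finally show ?thesis by (simp add: c_def)
qed

lemma nn_integral_set_uniform:
  assumes "A \<in> sets M" "0 < emeasure M A" "emeasure M A < \<infinity>"
  shows "(\<integral>\<^sup>+ x \<in> A. ennreal (1 / measure M A) \<partial>M) = 1"
proof -
  have "emeasure M A = ennreal (measure M A)"
    using assms(3) by (intro emeasure_eq_ennreal_measure) simp
  moreover have "0 < measure M A"
    using assms(2,3) by (simp add: measure_def enn2real_positive_iff)
  ultimately show ?thesis
    using assms(1) by (simp add: nn_integral_cmult_indicator flip: ennreal_mult)
qed

lemma set_integrable_density_eq_1:
  fixes p :: "'a \<Rightarrow> real"
  assumes "A \<in> sets M" "p \<in> borel_measurable M" "\<And>x. 0 \<le> p x"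
    and "(\<integral>\<^sup>+ x. ennreal (indicator A x * p x) \<partial>M) = 1"
  shows "set_integrable M A p \<and> (LINT x:A|M. p x) = 1
    \<and> prob_space (density M (\<lambda>x. ennreal (indicator A x * p x)))"
proof -
  have meas: "(\<lambda>x. indicator A x * p x) \<in> borel_measurable M"
    using assms(1,2) by measurable
  then have int: "integrable M (\<lambda>x. indicator A x * p x) \<and> (\<integral>x. indicator A x * p x \<partial>M) = 1"
    using nn_integral_eq_integrable[of _ M 1] assms(3,4) by simp
  have "emeasure (density M (\<lambda>x. ennreal (indicator A x * p x))) (space M)
      = (\<integral>\<^sup>+ x. ennreal (indicator A x * p x) * indicator (space M) x \<partial>M)"
    using meas by (intro emeasure_density) simp_all
  also have "\<dots> = 1"
    using assms(4) by (simp cong: nn_integral_cong)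
  finally have "prob_space (density M (\<lambda>x. ennreal (indicator A x * p x)))"
    by (intro prob_spaceI) simp
  with int show ?thesis
    by (simp add: set_integrable_def set_lebesgue_integral_def)
qed

section \<open>The layer densities\<close>

locale sampled_network =
  fixes X :: "'a::euclidean_space set" and f :: "'a \<Rightarrow> 'b::euclidean_space"
    and nY :: "'b \<Rightarrow> real" and nX0 :: "'a \<Rightarrow> real" and nX :: "nat \<Rightarrow> (nat \<Rightarrow> real) \<Rightarrow> real"
    and eps s1 s2 :: real and \<phi> :: "real \<Rightarrow> real" and L :: nat and N :: "nat \<Rightarrow> nat"
  assumes compact_X: "compact X" and emeasure_X_pos: "emeasure lborel X > 0"
    and norm_Y: "is_norm_on UNIV nY" and norm_X0: "is_norm_on UNIV nX0"
    and norm_X: "\<And>k. 1 \<le> k \<Longrightarrow> k < L \<Longrightarrow> is_norm_fin (N k) (nX k)"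
    and lipschitz_f: "\<exists>K. \<forall>x y. nY (f x - f y) \<le> K * nX0 (x - y)"
    and continuous_\<phi>: "continuous_on UNIV \<phi>" and eps_pos: "eps > 0"
begin

abbreviation "q\<^sub>l \<equiv> qdens f nY nX0 nX eps \<phi> s1 s2 N"

abbreviation "C\<^sub>l \<equiv> Cconst f nY nX0 nX eps \<phi> s1 s2 N X"

abbreviation "p\<^sub>l \<equiv> pdens f nY nX0 nX eps \<phi> s1 s2 N X"

lemma lipschitz_f_nonneg:
  obtains K where "0 \<le> K" "\<And>x y. nY (f x - f y) \<le> K * nX0 (x - y)"
proof -
  obtain K where K: "\<And>x y. nY (f x - f y) \<le> K * nX0 (x - y)" using lipschitz_f by blast
  have "K * nX0 (x - y) \<le> \<bar>K\<bar> * nX0 (x - y)" for x y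
    using is_norm_on_nonneg[OF norm_X0] by (intro mult_right_mono) auto
  with K that[of "\<bar>K\<bar>"] show thesis by (meson abs_ge_zero order_trans)
qed

lemma continuous_on_increment: "continuous_on UNIV (\<lambda>z. nY (f (snd z) - f (fst z)))"
proof -
  obtain K where K: "0 \<le> K" "\<And>x y. nY (f x - f y) \<le> K * nX0 (x - y)"
    using lipschitz_f_nonneg by blast
  obtain C where C: "0 \<le> C" "\<And>x. nX0 x \<le> C * norm x"
    using is_norm_on_le_norm[OF norm_X0] by blast
  have "(2 * K * C)-lipschitz_on UNIV (\<lambda>z. nY (f (snd z) - f (fst z)))"
  proof (rule lipschitz_onI)
    fix z z' :: "'a \<times> 'a"
    obtain a b a' b' where z: "z = (a, b)" "z' = (a', b')" by fastforce
    have "\<bar>nY (f b - f a) - nY (f b' - f a')\<bar> \<le> nY ((f b - f b') + (f a' - f a))"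
      using is_norm_on_abs_diff_le[OF norm_Y, of "f b - f a" "f b' - f a'"] by (simp add: algebra_simps)
    also have "\<dots> \<le> K * nX0 (b - b') + K * nX0 (a' - a)"
      using is_norm_on_triangle[OF norm_Y] K(2) by (meson add_mono order_trans)
    also have "\<dots> \<le> K * (C * dist z z') + K * (C * dist z z')"
    proof -
      have "norm (b - b') \<le> dist z z'" "norm (a' - a) \<le> dist z z'"
        using dist_snd_le[of z z'] dist_fst_le[of z z'] by (simp_all add: z dist_norm norm_minus_commute)
      then have "nX0 (b - b') \<le> C * dist z z'" "nX0 (a' - a) \<le> C * dist z z'"
        using C by (meson mult_left_mono order_trans)+
      then show ?thesis
        using K(1) by (intro add_mono mult_left_mono)
    qed
    finally show "dist (nY (f (snd z) - f (fst z))) (nY (f (snd z') - f (fst z'))) \<le> 2 * K * C * dist z z'"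
      by (simp add: z dist_real_def algebra_simps)
  qed (use K C in simp)
  then show ?thesis by (rule lipschitz_on_continuous_on)
qed

lemma increment_bounded:
  obtains B where "\<And>a b. a \<in> X \<Longrightarrow> b \<in> X \<Longrightarrow> nY (f b - f a) \<le> B"
proof -
  have "compact ((\<lambda>z. nY (f (snd z) - f (fst z))) ` (X \<times> X))"
    by (intro compact_continuous_image continuous_on_subset[OF continuous_on_increment])
      (auto simp: compact_Times compact_X)
  then obtain B where "\<forall>y \<in> (\<lambda>z. nY (f (snd z) - f (fst z))) ` (X \<times> X). \<bar>y\<bar> \<le> B"
    by (auto dest!: compact_imp_bounded simp: bounded_real)
  with that[of B] show thesis by force
qed

lemma qdens_nonneg: "0 \<le> q\<^sub>l xs l a b"
  unfolding qdens_def Let_def using is_norm_on_nonneg[OF norm_Y] eps_pos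
  by (auto intro!: divide_nonneg_nonneg)

lemma qdens_bounded:
  obtains B where "\<And>xs l a b. a \<in> X \<Longrightarrow> b \<in> X \<Longrightarrow> q\<^sub>l xs l a b \<le> B"
proof -
  obtain K where K: "0 \<le> K" "\<And>x y. nY (f x - f y) \<le> K * nX0 (x - y)"
    using lipschitz_f_nonneg by blast
  obtain B where B: "\<And>a b. a \<in> X \<Longrightarrow> b \<in> X \<Longrightarrow> nY (f b - f a) \<le> B"
    using increment_bounded by blast
  have "q\<^sub>l xs l a b \<le> max K (B / eps)" if "a \<in> X" "b \<in> X" for xs l a b
  proof (cases "l = 1")
    case True
    have "nY (f b - f a) / nX0 (b - a) \<le> K" if "a \<noteq> b"
      using that K(2)[of b a] is_norm_on_nonneg[OF norm_X0, of "b - a"] is_norm_on_eq_0_iff[OF norm_X0, of "b - a"]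
      by (simp add: divide_le_eq)
    with True K(1) is_norm_on_nonneg[OF norm_X0, of "b - a"] show ?thesis
      by (auto simp: qdens_def max_def)
  next
    case False
    have "q\<^sub>l xs l a b \<le> nY (f b - f a) / eps"
      using False is_norm_on_nonneg[OF norm_Y] eps_pos
      by (auto simp: qdens_def Let_def intro!: divide_left_mono)
    also have "\<dots> \<le> B / eps"
      using B[OF that] eps_pos by (simp add: divide_right_mono)
    finally show ?thesis by simp
  qed
  with that show thesis by blast
qed

lemma borel_measurable_qdens:
  assumes XS: "\<And>i. (\<lambda>\<omega>. XS \<omega> i) \<in> borel_measurable M"
    and [measurable]: "A \<in> borel_measurable M" "B \<in> borel_measurable M" and "l \<le> L"
  shows "(\<lambda>\<omega>. q\<^sub>l (XS \<omega>) l (A \<omega>) (B \<omega>)) \<in> borel_measurable M"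
proof -
  have [measurable]: "(\<lambda>\<omega>. nY (f (B \<omega>) - f (A \<omega>))) \<in> borel_measurable M"
    using borel_measurable_continuous_Pair[of A M B "\<lambda>a b. nY (f b - f a)"] continuous_on_increment
    by simp
  consider "l = 0" | "l = 1" | "2 \<le> l" by linarith
  then show ?thesis
  proof cases
    case 1
    then show ?thesis by (simp add: qdens_def)
  next
    case 2
    have [measurable]: "(\<lambda>\<omega>. nX0 (B \<omega> - A \<omega>)) \<in> borel_measurable M"
      by (intro borel_measurable_continuous_on[OF continuous_on_is_norm_on[OF norm_X0]]) simp
    have eq: "q\<^sub>l (XS \<omega>) l (A \<omega>) (B \<omega>)
        = (if nX0 (B \<omega> - A \<omega>) \<noteq> 0 then nY (f (B \<omega>) - f (A \<omega>)) / max (nX0 (B \<omega> - A \<omega>)) 0 else 0)" for \<omega>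
      using 2 is_norm_on_eq_0_iff[OF norm_X0, of "B \<omega> - A \<omega>"] by (simp add: qdens_def)
    show ?thesis unfolding eq by measurable
  next
    case 3
    define k where "k = l - 1"
    have k: "1 \<le> k" "k < L" using 3 \<open>l \<le> L\<close> by (auto simp: k_def)
    let ?u = "\<lambda>\<omega>. Phi \<phi> s1 s2 N (XS \<omega>) k (A \<omega>)" and ?v = "\<lambda>\<omega>. Phi \<phi> s1 s2 N (XS \<omega>) k (B \<omega>)"
    have vanish: "?v \<omega> j - ?u \<omega> j = 0" if "N k \<le> j" for \<omega> j
      using k(1) that by (simp add: Phi_eq_0)
    have [measurable]: "(\<lambda>\<omega>. nX k (\<lambda>j. ?v \<omega> j - ?u \<omega> j)) \<in> borel_measurable M"
      using borel_measurable_Phi[OF continuous_\<phi> XS] vanish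
      by (intro borel_measurable_is_norm_fin[OF norm_X[OF k]]) auto
    have "nX k (\<lambda>j. ?v \<omega> j - ?u \<omega> j) = 0 \<longleftrightarrow> ?u \<omega> = ?v \<omega>" for \<omega>
      using is_norm_fin_eq_0_iff[OF norm_X[OF k]] vanish by (force simp: fun_eq_iff)
    then have eq: "q\<^sub>l (XS \<omega>) l (A \<omega>) (B \<omega>) = (if nX k (\<lambda>j. ?v \<omega> j - ?u \<omega> j) \<noteq> 0
        then nY (f (B \<omega>) - f (A \<omega>)) / max (nX k (\<lambda>j. ?v \<omega> j - ?u \<omega> j)) eps else 0)" for \<omega>
      using 3 by (simp add: qdens_def Let_def k_def)
    show ?thesis unfolding eq by measurable
  qed
qed

lemma sets_X: "X \<in> sets lborel"
  using compact_imp_closed[OF compact_X] by simp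

lemma sets_X_times_X: "X \<times> X \<in> sets (lborel :: ('a \<times> 'a) measure)"
  using compact_imp_closed[OF compact_X] by (simp add: closed_Times)

lemma emeasure_X_times_X: "0 < emeasure lborel (X \<times> X)" "emeasure lborel (X \<times> X) < \<infinity>"
proof -
  have "emeasure lborel (X \<times> X) = emeasure lborel X * emeasure lborel X"
    using sets_X by (simp add: lborel_prod[symmetric] lborel.emeasure_pair_measure_Times)
  then show "0 < emeasure lborel (X \<times> X)"
    using emeasure_X_pos by (simp add: ennreal_zero_less_mult_iff)
  show "emeasure lborel (X \<times> X) < \<infinity>"
    by (intro emeasure_bounded_finite compact_imp_bounded compact_Times compact_X)
qed

lemma borel_measurable_Cconst:
  assumes XS: "\<And>i. (\<lambda>\<omega>. XS \<omega> i) \<in> borel_measurable M" and "l \<le> L"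
  shows "(\<lambda>\<omega>. C\<^sub>l (XS \<omega>) l) \<in> borel_measurable M"
proof -
  have "(\<lambda>p. q\<^sub>l (XS (fst p)) l (fst (snd p)) (snd (snd p))) \<in> borel_measurable (M \<Otimes>\<^sub>M (lborel :: ('a \<times> 'a) measure))"
  proof (rule borel_measurable_qdens)
    show "(\<lambda>p. XS (fst p) i) \<in> borel_measurable (M \<Otimes>\<^sub>M lborel)" for i
      by (rule measurable_fst''[OF XS])
    show "(\<lambda>p. fst (snd p)) \<in> borel_measurable (M \<Otimes>\<^sub>M lborel)" "(\<lambda>p. snd (snd p)) \<in> borel_measurable (M \<Otimes>\<^sub>M lborel)"
      by (rule measurable_compose[OF measurable_snd], simp)+
  qed fact
  then have "(\<lambda>p. ennreal (q\<^sub>l (XS (fst p)) l (fst (snd p)) (snd (snd p))) * indicator (X \<times> X) (snd p))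
      \<in> borel_measurable (M \<Otimes>\<^sub>M (lborel :: ('a \<times> 'a) measure))"
    using sets_X_times_X by measurable
  then show ?thesis
    unfolding Cconst_def by (intro lborel.borel_measurable_nn_integral) (simp add: case_prod_unfold)
qed

lemma borel_measurable_pdens:
  assumes "\<And>i. (\<lambda>\<omega>. XS \<omega> i) \<in> borel_measurable M"
    and "A \<in> borel_measurable M" "B \<in> borel_measurable M" "l \<le> L"
  shows "(\<lambda>\<omega>. p\<^sub>l (XS \<omega>) l (A \<omega>) (B \<omega>)) \<in> borel_measurable M"
proof -
  note [measurable] = borel_measurable_qdens[OF assms] borel_measurable_Cconst[OF assms(1,4)]
  show ?thesis unfolding pdens_def by measurable
qed

lemma pdens_nonneg: "0 \<le> p\<^sub>l xs l a b"
  unfolding pdens_def using qdens_nonneg by (auto intro!: divide_nonneg_nonneg)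

lemma Cconst_finite: "C\<^sub>l xs l < \<infinity>"
proof -
  obtain B where B: "\<And>xs l a b. a \<in> X \<Longrightarrow> b \<in> X \<Longrightarrow> q\<^sub>l xs l a b \<le> B"
    by (metis qdens_bounded)
  have "C\<^sub>l xs l \<le> (\<integral>\<^sup>+ z. ennreal B * indicator (X \<times> X) z \<partial>lborel)"
    unfolding Cconst_def by (intro nn_integral_mono) (auto simp: indicator_def intro!: ennreal_leI B)
  also have "\<dots> = ennreal B * emeasure lborel (X \<times> X)"
    using sets_X_times_X by (simp add: nn_integral_cmult_indicator)
  also have "\<dots> < \<infinity>"
    using emeasure_X_times_X(2) by (simp add: ennreal_mult_less_top)
  finally show ?thesis .
qed

lemma nn_integral_pdens:
  assumes "l \<le> L"
  shows "(\<integral>\<^sup>+ z \<in> X \<times> X. ennreal (p\<^sub>l xs l (fst z) (snd z)) \<partial>lborel) = 1"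
proof (cases "0 < C\<^sub>l xs l")
  case True
  have "(\<lambda>z. q\<^sub>l xs l (fst z) (snd z)) \<in> borel_measurable (lborel :: ('a \<times> 'a) measure)"
    using assms by (intro borel_measurable_qdens) simp_all
  from nn_integral_set_normalize[OF this sets_X_times_X qdens_nonneg] True Cconst_finite[of xs l]
  show ?thesis by (simp add: pdens_def Cconst_def)
next
  case False
  then show ?thesis
    using nn_integral_set_uniform[OF sets_X_times_X emeasure_X_times_X] by (simp add: pdens_def)
qed

lemma pdens_cong_prefix:
  assumes "\<And>i. i < 2 * Nb N (l - 1) \<Longrightarrow> xs i = ys i"
  shows "p\<^sub>l xs l = p\<^sub>l ys l"
proof -
  have "q\<^sub>l xs l = q\<^sub>l ys l"
    using Phi_cong_prefix[of N "l - 1" xs ys, OF assms] by (simp add: fun_eq_iff qdens_def)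
  then show ?thesis
    by (simp add: fun_eq_iff pdens_def Cconst_def)
qed

lemma borel_measurable_joint_dens:
  "joint_dens f nY nX0 nX eps \<phi> s1 s2 L N X \<in> borel_measurable (Pi\<^sub>M I (\<lambda>_. lborel))"
  unfolding joint_dens_eq_prod_neurons[abs_def]
  using borel_measurable_PiM_component layer_of_bounds(2)
  by (intro borel_measurable_prod borel_measurable_pdens) auto

lemma joint_dens_nonneg: "0 \<le> joint_dens f nY nX0 nX eps \<phi> s1 s2 L N X xs"
  unfolding joint_dens_def by (intro prod_nonneg pdens_nonneg)

definition neuron_dens :: "nat \<Rightarrow> (nat \<Rightarrow> 'a) \<Rightarrow> ennreal" where
  "neuron_dens j xs = indicator X (xs (2 * j)) * indicator X (xs (2 * j + 1))
    * ennreal (p\<^sub>l xs (layer_of N j) (xs (2 * j)) (xs (2 * j + 1)))"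

lemma neuron_dens_cong_prefix:
  assumes "j < Nb N L" "\<And>i. i < 2 * Suc j \<Longrightarrow> xs i = ys i"
  shows "neuron_dens j xs = neuron_dens j ys"
proof -
  have "p\<^sub>l xs (layer_of N j) = p\<^sub>l ys (layer_of N j)"
    using layer_of_bounds(3)[OF assms(1)] assms(2) by (intro pdens_cong_prefix) simp
  then show ?thesis
    using assms(2) by (simp add: neuron_dens_def)
qed

lemma borel_measurable_neuron_dens:
  assumes "j < Nb N L"
  shows "neuron_dens j \<in> borel_measurable (Pi\<^sub>M {..<2 * Suc j} (\<lambda>_. lborel))"
proof -
  have [measurable]: "(\<lambda>xs. p\<^sub>l xs (layer_of N j) (xs (2 * j)) (xs (2 * j + 1)))
      \<in> borel_measurable (Pi\<^sub>M {..<2 * Suc j} (\<lambda>_. lborel))"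
    using layer_of_bounds(2)[OF assms] by (intro borel_measurable_pdens borel_measurable_PiM_component)
  show ?thesis
    unfolding neuron_dens_def[abs_def] using sets_X by measurable
qed

lemma nn_integral_neuron_dens:
  assumes "j < Nb N L"
  shows "(\<integral>\<^sup>+ (y, z). neuron_dens j (xs(2 * j := y, 2 * j + 1 := z)) \<partial>(lborel \<Otimes>\<^sub>M lborel)) = 1"
proof -
  have "p\<^sub>l (xs(2 * j := y, 2 * j + 1 := z)) (layer_of N j) = p\<^sub>l xs (layer_of N j)" for y z
    using layer_of_bounds(3)[OF assms] by (intro pdens_cong_prefix) simp
  then have "neuron_dens j (xs(2 * j := y, 2 * j + 1 := z))
      = ennreal (p\<^sub>l xs (layer_of N j) y z) * indicator (X \<times> X) (y, z)" for y z
    by (simp add: neuron_dens_def indicator_times mult_ac)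
  then show ?thesis
    using nn_integral_pdens[OF layer_of_bounds(2)[OF assms], of xs]
    by (simp add: lborel_prod case_prod_unfold)
qed

lemma indicator_times_joint_dens:
  assumes "xs \<in> space (Pi\<^sub>M {..<2 * Nb N L} (\<lambda>_. lborel))"
  shows "ennreal (indicator (Pi\<^sub>E {..<2 * Nb N L} (\<lambda>_. X)) xs * joint_dens f nY nX0 nX eps \<phi> s1 s2 L N X xs)
    = (\<Prod>j<Nb N L. neuron_dens j xs)"
proof -
  have "indicator (Pi\<^sub>E {..<2 * Nb N L} (\<lambda>_. X)) xs
      = (\<Prod>j<Nb N L. indicator X (xs (2 * j)) * indicator X (xs (2 * j + 1)) :: ennreal)"
    using assms by (intro indicator_PiE_eq_prod_pairs) (simp add: space_PiM PiE_def)
  then show ?thesis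
    by (simp add: neuron_dens_def joint_dens_eq_prod_neurons ennreal_mult' ennreal_indicator prod_ennreal
        pdens_nonneg prod.distrib)
qed

lemma nn_integral_joint_dens:
  "(\<integral>\<^sup>+ xs. ennreal (indicator (Pi\<^sub>E {..<2 * Nb N L} (\<lambda>_. X)) xs * joint_dens f nY nX0 nX eps \<phi> s1 s2 L N X xs)
     \<partial>Pi\<^sub>M {..<2 * Nb N L} (\<lambda>_. lborel)) = 1"
proof -
  have "(\<integral>\<^sup>+ xs. (\<Prod>j<Nb N L. neuron_dens j xs) \<partial>Pi\<^sub>M {..<2 * Nb N L} (\<lambda>_. lborel)) = 1"
    using sigma_finite_lborel borel_measurable_neuron_dens neuron_dens_cong_prefix nn_integral_neuron_dens
    by (rule nn_integral_PiM_prod_pair_kernels)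
  then show ?thesis
    by (simp add: indicator_times_joint_dens cong: nn_integral_cong)
qed

end

theorem proposition1:
  fixes X :: "'a::euclidean_space set"
    and f :: "'a \<Rightarrow> 'b::euclidean_space"
    and nY :: "'b \<Rightarrow> real" and nX0 :: "'a \<Rightarrow> real"
    and nX :: "nat \<Rightarrow> (nat \<Rightarrow> real) \<Rightarrow> real"
    and eps s1 s2 :: real and \<phi> :: "real \<Rightarrow> real"
    and L :: nat and N :: "nat \<Rightarrow> nat"
  assumes "compact X" and "emeasure lborel X > 0"
    and "is_norm_on UNIV nY" and "is_norm_on UNIV nX0"
    and "\<And>k. 1 \<le> k \<Longrightarrow> k < L \<Longrightarrow> is_norm_fin (N k) (nX k)"
    and "\<exists>K. \<forall>x y. nY (f x - f y) \<le> K * nX0 (x - y)"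
    and "continuous_on UNIV \<phi>"
    and "eps > 0"
  defines "M \<equiv> PiM {..<2 * Nb N L} (\<lambda>_. lborel :: 'a measure)"
    and "Xbar \<equiv> PiE {..<2 * Nb N L} (\<lambda>_. X)"
    and "p \<equiv> joint_dens f nY nX0 nX eps \<phi> s1 s2 L N X"
  shows "set_integrable M Xbar p \<and> (LINT xs:Xbar|M. p xs) = 1
         \<and> prob_space (density M (\<lambda>xs. ennreal (indicator Xbar xs * p xs)))"
proof -
  interpret sampled_network X f nY nX0 nX eps s1 s2 \<phi> L N
    by unfold_locales (use assms in auto)
  have "Xbar \<in> sets M"
    unfolding Xbar_def M_def using sets_X by (intro sets_PiM_I_finite) auto
  then show ?thesis
    unfolding p_def
    by (rule set_integrable_density_eq_1[OF _ _ joint_dens_nonneg])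
      (simp_all add: M_def Xbar_def borel_measurable_joint_dens nn_integral_joint_dens)
qed

end
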